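(* Let $X$ be a Tychonoff space and $\mathcal A,\mathcal B\subseteq\wp(X)$. The following are equivalent: (i) One has a winning predetermined strategy in $G_1(\mathscr N_{C_{\mathcal A}(X)}(\mathbf 0),\neg\Gamma_{C_{\mathcal B}(X),\mathbf 0})$; (ii) One has a winning predetermined strategy in $G_1(\mathscr N_{C_{\mathcal A}(X)}(\mathbf 0),\neg\Omega_{C_{\mathcal B}(X),\mathbf 0})$; (iii) $\mathrm{cof}(\mathscr N_{C_{\mathcal A}(X)}(\mathbf 0);\mathscr N_{C_{\mathcal B}(X)}(\mathbf 0),\supseteq)=\omega$.
   Context: $C_{\mathcal A}(X)$ is the set of continuous $f:X\to\mathbb R$ with the topology generated by the sets $[f;A,\varepsilon]=\{g:\sup_{x\in A}|f(x)-g(x)|<\varepsilon\}$, $A\in\mathcal A$, $\varepsilon>0$; similarly $C_{\mathcal B}(X)$. $\mathbf 0$ is the zero function; $\mathscr N_Y(y)$ is the set of open neighbourhoods of $y$ in $Y$; $\Omega_{Y,y}=\{S\subseteq Y:y\in\mathrm{cl}_Y(S)\}$; Two's selections $(y_n)$ count as belonging to $\Gamma_{Y,y}$ iff the sequence converges to $y$ in $Y$. In $G_1(\mathcal E,\mathcal C)$, at each inning $n\in\omega$ One plays $E_n\in\mathcal E$ and Two picks $x_n\in E_n$; Two wins iff $\{x_n\}\in\mathcal C$; $\neg\mathcal C$ is the complement of $\mathcal C$. A predetermined strategy for One is a sequence $(E_n)_{n\in\omega}$ of moves; it is winning if One wins whenever Two picks $x_n\in E_n$ for all $n$. $\mathrm{cof}(\mathcal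 E;\mathcal F,\supseteq)$ is the least cardinal $\kappa$ such that there are $\{E_\alpha:\alpha<\kappa\}\subseteq\mathcal E$ with every $F\in\mathcal F$ containing some $E_\alpha$. *)

theory Defs
  imports "HOL-Analysis.Analysis" "HOL-Library.Extended_Real" "HOL-Library.Countable_Set"
begin

definition tychonoff_space :: "'a topology \<Rightarrow> bool" where
  "tychonoff_space X \<longleftrightarrow> completely_regular_space X \<and> Hausdorff_space X"

text \<open>C(X): continuous real functions on X, normalised to 0 outside the carrier
  so that functions are identified with their restriction to topspace X.\<close>
definition Cfun :: "'a topology \<Rightarrow> ('a \<Rightarrow> real) set" where
  "Cfun X = {f. continuous_map X euclideanreal f \<and> (\<forall>x. x \<notin> topspace X \<longrightarrow> f x = 0)}"

definition zero_fun :: "'a \<Rightarrow> real" where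
  "zero_fun = (\<lambda>x. 0)"

definition bracket :: "'a topology \<Rightarrow> ('a \<Rightarrow> real) \<Rightarrow> 'a set \<Rightarrow> real \<Rightarrow> ('a \<Rightarrow> real) set" where
  "bracket X f A \<epsilon> = {g \<in> Cfun X. (SUP x\<in>A. ereal \<bar>f x - g x\<bar>) < ereal \<epsilon>}"

definition CA_top :: "'a topology \<Rightarrow> 'a set set \<Rightarrow> ('a \<Rightarrow> real) topology" where
  "CA_top X \<A> = topology_generated_by
     (insert (Cfun X) {bracket X f A \<epsilon> | f A \<epsilon>. f \<in> Cfun X \<and> A \<in> \<A> \<and> \<epsilon> > 0})"

definition nbhds :: "'b topology \<Rightarrow> 'b \<Rightarrow> 'b set set" where
  "nbhds Y y = {U. openin Y U \<and> y \<in> U}"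

definition Omega_at :: "'b topology \<Rightarrow> 'b \<Rightarrow> 'b set set" where
  "Omega_at Y y = {S. S \<subseteq> topspace Y \<and> y \<in> Y closure_of S}"

definition Gamma_at :: "'b topology \<Rightarrow> 'b \<Rightarrow> (nat \<Rightarrow> 'b) \<Rightarrow> bool" where
  "Gamma_at Y y s \<longleftrightarrow> limitin Y s y sequentially"

text \<open>Game G_1(E, W): One plays E_n in E, Two picks x_n in E_n; Two wins iff W (x_n).\<close>
definition one_predet_wins_G1 :: "'b set set \<Rightarrow> ((nat \<Rightarrow> 'b) \<Rightarrow> bool) \<Rightarrow> bool" where
  "one_predet_wins_G1 \<E> W \<longleftrightarrow>
     (\<exists>E::nat \<Rightarrow> 'b set. (\<forall>n. E n \<in> \<E>) \<and> (\<forall>x. (\<forall>n. x n \<in> E n) \<longrightarrow> \<not> W x))"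

definition cof_le_omega :: "'b set set \<Rightarrow> 'b set set \<Rightarrow> bool" where
  "cof_le_omega \<E> \<F> \<longleftrightarrow> (\<exists>\<C> \<subseteq> \<E>. countable \<C> \<and> (\<forall>F\<in>\<F>. \<exists>E\<in>\<C>. E \<subseteq> F))"

end

theory Submission
  imports Defs
begin

text \<open>Nothing about function spaces is needed: the equivalences hold for any two topologies
  \<open>T\<^sub>A\<close>, \<open>T\<^sub>B\<close> on the same set and any point \<open>z\<close> of it. If every selection from One's moves \<open>E\<^sub>n\<close> accumulates at \<open>z\<close>, then every
  \<open>T\<^sub>B\<close>-neighbourhood \<open>U\<close> contains some \<open>E\<^sub>n\<close>, since otherwise Two picks \<open>x\<^sub>n \<in> E\<^sub>n - U\<close>;
  so the \<open>E\<^sub>n\<close> form a countable cofinal family. Conversely, the finite intersections of a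
  countable cofinal family form a decreasing sequence of moves along which every selection
  converges to \<open>z\<close>, and convergence implies accumulation.\<close>

lemma one_predet_wins_G1_mono:
  assumes "one_predet_wins_G1 \<E> W"
    and "\<And>x. (\<And>n. x n \<in> \<Union>\<E>) \<Longrightarrow> W' x \<Longrightarrow> W x"
  shows "one_predet_wins_G1 \<E> W'"
  using assms unfolding one_predet_wins_G1_def by blast

lemma limitin_sequentially_in_closure_of_range:
  assumes "limitin X x z sequentially" and "range x \<subseteq> topspace X"
  shows "z \<in> X closure_of range x"
  using closure_of_subset[OF assms(2)]
  by (intro limitin_closedin[OF assms(1) closedin_closure_of] always_eventually) auto

lemma ex_move_subset_nbhd_if_selections_accumulate:
  assumes accumulate: "\<And>x. (\<And>n. x n \<in> E n) \<Longrightarrow> z \<in> Y closure_of range x"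
    and U: "U \<in> nbhds Y z"
  shows "\<exists>n. E n \<subseteq> U"
proof (rule ccontr)
  assume "\<nexists>n. E n \<subseteq> U"
  then have "\<forall>n. \<exists>y. y \<in> E n - U"
    by blast
  then obtain x where x: "\<And>n. x n \<in> E n - U"
    by metis
  then have "z \<in> Y closure_of range x"
    using accumulate by simp
  with U x show False
    unfolding in_closure_of nbhds_def by blast
qed

lemma countable_nbhds_decseq:
  assumes "\<C> \<subseteq> nbhds X z" and "countable \<C>" and "\<C> \<noteq> {}"
  obtains E where "\<And>n. E n \<in> nbhds X z" and "decseq E" and "\<And>D. D \<in> \<C> \<Longrightarrow> \<exists>n. E n \<subseteq> D"
proof
  let ?c = "from_nat_into \<C>"
  have c: "openin X (?c k) \<and> z \<in> ?c k" for k
    using assms from_nat_into[of \<C> k] unfolding nbhds_def by auto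
  show "(\<Inter>k\<le>n. ?c k) \<in> nbhds X z" for n
    using c unfolding nbhds_def by auto
  show "decseq (\<lambda>n. \<Inter>k\<le>n. ?c k)"
    by (auto simp: decseq_def)
  show "\<exists>n. (\<Inter>k\<le>n. ?c k) \<subseteq> D" if "D \<in> \<C>" for D
    using that from_nat_into_surj[OF assms(2)] by (metis INT_lower atMost_iff order_refl)
qed

lemma limitin_selection_of_decseq:
  assumes "decseq E" and "z \<in> topspace Y"
    and cofinal: "\<And>U. U \<in> nbhds Y z \<Longrightarrow> \<exists>n. E n \<subseteq> U"
    and x: "\<And>n. x n \<in> E n"
  shows "limitin Y x z sequentially"
  unfolding limitin_def
proof (intro conjI allI impI)
  fix U assume "openin Y U \<and> z \<in> U"
  then obtain k where "E k \<subseteq> U"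
    using cofinal unfolding nbhds_def by blast
  then have "x n \<in> U" if "k \<le> n" for n
    using x[of n] decseqD[OF \<open>decseq E\<close> that] by blast
  then show "eventually (\<lambda>n. x n \<in> U) sequentially"
    unfolding eventually_sequentially by blast
qed (fact \<open>z \<in> topspace Y\<close>)

context
  fixes TA TB :: "'b topology" and z :: 'b
  assumes same_topspace: "topspace TA = topspace TB" and z: "z \<in> topspace TA"
begin

lemma one_predet_wins_not_Omega_if_not_Gamma:
  assumes "one_predet_wins_G1 (nbhds TA z) (\<lambda>x. \<not> Gamma_at TB z x)"
  shows "one_predet_wins_G1 (nbhds TA z) (\<lambda>x. \<not> range x \<in> Omega_at TB z)"
proof (rule one_predet_wins_G1_mono[OF assms])
  fix x :: "nat \<Rightarrow> 'b"
  assume moves: "\<And>n. x n \<in> \<Union>(nbhds TA z)"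
  have "\<Union>(nbhds TA z) \<subseteq> topspace TB"
    using same_topspace unfolding nbhds_def by (auto dest: openin_subset)
  with moves have "range x \<subseteq> topspace TB"
    by blast
  then show "\<not> Gamma_at TB z x" if "range x \<notin> Omega_at TB z"
    using that limitin_sequentially_in_closure_of_range[of TB x z]
    unfolding Gamma_at_def Omega_at_def by fastforce
qed

lemma cof_le_omega_if_one_predet_wins_not_Omega:
  assumes "one_predet_wins_G1 (nbhds TA z) (\<lambda>x. \<not> range x \<in> Omega_at TB z)"
  shows "cof_le_omega (nbhds TA z) (nbhds TB z)"
proof -
  obtain E :: "nat \<Rightarrow> 'b set" where E: "\<And>n. E n \<in> nbhds TA z"
    and selections: "\<And>x. (\<And>n. x n \<in> E n) \<Longrightarrow> range x \<in> Omega_at TB z"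
    using assms unfolding one_predet_wins_G1_def by blast
  have accumulate: "z \<in> TB closure_of range x" if "\<And>n. x n \<in> E n" for x
    using selections[OF that] unfolding Omega_at_def by simp
  have "\<forall>U\<in>nbhds TB z. \<exists>D\<in>range E. D \<subseteq> U"
    using ex_move_subset_nbhd_if_selections_accumulate[OF accumulate] by auto
  moreover have "range E \<subseteq> nbhds TA z"
    using E by blast
  ultimately show ?thesis
    unfolding cof_le_omega_def by blast
qed

lemma one_predet_wins_not_Gamma_if_cof_le_omega:
  assumes "cof_le_omega (nbhds TA z) (nbhds TB z)"
  shows "one_predet_wins_G1 (nbhds TA z) (\<lambda>x. \<not> Gamma_at TB z x)"
proof -
  obtain \<C> where \<C>: "\<C> \<subseteq> nbhds TA z" "countable \<C>"
    and cofinal: "\<And>U. U \<in> nbhds TB z \<Longrightarrow> \<exists>D\<in>\<C>. D \<subseteq> U"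
    using assms unfolding cof_le_omega_def by blast
  have "topspace TB \<in> nbhds TB z"
    using z same_topspace unfolding nbhds_def by auto
  then have "\<C> \<noteq> {}"
    using cofinal by blast
  then obtain E :: "nat \<Rightarrow> 'b set" where E: "\<And>n. E n \<in> nbhds TA z" "decseq E"
    and E_cofinal: "\<And>D. D \<in> \<C> \<Longrightarrow> \<exists>n. E n \<subseteq> D"
    using countable_nbhds_decseq[OF \<C>] by blast
  have "\<exists>n. E n \<subseteq> U" if "U \<in> nbhds TB z" for U
    using cofinal[OF that] E_cofinal by blast
  then have "Gamma_at TB z x" if "\<And>n. x n \<in> E n" for x
    unfolding Gamma_at_def using z same_topspace
    by (auto intro: limitin_selection_of_decseq[OF E(2) _ _ that])
  then show ?thesis
    unfolding one_predet_wins_G1_def using E(1) by blast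
qed

end

lemma topspace_CA_top: "topspace (CA_top X \<A>) = Cfun X"
  unfolding CA_top_def topology_generated_by_topspace bracket_def by auto

lemma zero_fun_in_Cfun: "zero_fun \<in> Cfun X"
  unfolding Cfun_def zero_fun_def by auto

theorem mainTheorem12:
  fixes X :: "'a topology" and \<A> \<B> :: "'a set set"
  assumes "tychonoff_space X"
    and "\<forall>A\<in>\<A>. A \<subseteq> topspace X" and "\<forall>B\<in>\<B>. B \<subseteq> topspace X"
  shows "(one_predet_wins_G1 (nbhds (CA_top X \<A>) zero_fun)
            (\<lambda>x. \<not> Gamma_at (CA_top X \<B>) zero_fun x)
          \<longleftrightarrow> one_predet_wins_G1 (nbhds (CA_top X \<A>) zero_fun)
            (\<lambda>x. \<not> range x \<in> Omega_at (CA_top X \<B>) zero_fun))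
       \<and> (one_predet_wins_G1 (nbhds (CA_top X \<A>) zero_fun)
            (\<lambda>x. \<not> range x \<in> Omega_at (CA_top X \<B>) zero_fun)
          \<longleftrightarrow> cof_le_omega (nbhds (CA_top X \<A>) zero_fun) (nbhds (CA_top X \<B>) zero_fun))"
proof -
  have same_topspace: "topspace (CA_top X \<A>) = topspace (CA_top X \<B>)"
    and zero: "zero_fun \<in> topspace (CA_top X \<A>)"
    by (simp_all add: topspace_CA_top zero_fun_in_Cfun)
  show ?thesis
    using one_predet_wins_not_Omega_if_not_Gamma[OF same_topspace zero]
      cof_le_omega_if_one_predet_wins_not_Omega[OF same_topspace zero]
      one_predet_wins_not_Gamma_if_cof_le_omega[OF same_topspace zero]
    by blast
qed

end
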